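(* Let $G$ be a finitely generated group, $H$ a finitely generated subgroup, $A$ a finite alphabet, $S\subseteq H$ finite and $\mu:A^S\to A$. Let $\Phi_H:A^H\to A^H$ and $\Phi_G:A^G\to A^G$ be the cellular automata defined by $\Phi_H(x)(h)=\mu(s\mapsto x(hs))$ and $\Phi_G(x)(g)=\mu(s\mapsto x(gs))$. If $\Phi_G$ is sensitive to initial conditions, then so is $\Phi_H$.
   Context: Metrics: fix a finite generating set $E_H$ of $H$ closed under inverses and a finite generating set $D\supseteq E_H$ of $G$ closed under inverses, with word metrics $d_H$, $d_G$. The Cantor metric on $A^H$ is $d^H(x,y)=2^{-k}$ with $k=\min\{d_H(1,h):x(h)\neq y(h)\}$, and on $A^G$ similarly $d^G$ using $d_G$; $B^H$, $B^G$ denote closed balls. A map $\Phi$ on such a space with balls $B$ is sensitive to initial conditions if $\exists\epsilon>0\,\forall x\,\forall\delta>0\,\exists t\in\mathbb{N}\,\exists y\in B(x,\delta)$ with $\Phi^t(y)\notin B(\Phi^t(x),\epsilon)$. (This notion does not depend on the choice of generating sets.) *)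

theory Defs
  imports Complex_Main "HOL-Library.FuncSet"
begin

text \<open>Groups are written additively via the (non-commutative) type class group_add:
  the group operation is +, the identity 0, inverses uminus.\<close>

definition generated_by :: "'g::group_add set \<Rightarrow> 'g set" where
  "generated_by E = {sum_list xs | xs. set xs \<subseteq> E}"

definition word_len :: "'g::group_add set \<Rightarrow> 'g \<Rightarrow> nat" where
  "word_len E g = (LEAST n. \<exists>xs. length xs = n \<and> set xs \<subseteq> E \<and> sum_list xs = g)"

definition cantor_dist :: "'g::group_add set \<Rightarrow> ('g \<Rightarrow> 'a) \<Rightarrow> ('g \<Rightarrow> 'a) \<Rightarrow> real" where
  "cantor_dist E x y =
     (if x = y then 0 else (1/2) ^ (LEAST k. \<exists>h. x h \<noteq> y h \<and> word_len E h = k))"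

definition sensitive :: "('c \<Rightarrow> 'c \<Rightarrow> real) \<Rightarrow> 'c set \<Rightarrow> ('c \<Rightarrow> 'c) \<Rightarrow> bool" where
  "sensitive d X \<Phi> \<longleftrightarrow>
     (\<exists>\<epsilon>>0. \<forall>x\<in>X. \<forall>\<delta>>0. \<exists>t::nat. \<exists>y\<in>X.
        d x y \<le> \<delta> \<and> \<not> d ((\<Phi> ^^ t) x) ((\<Phi> ^^ t) y) \<le> \<epsilon>)"

text \<open>Cellular automaton on A^H (configurations are functions extensional on H)
  and on A^G (G = the whole type), with local rule mu : A^S \<rightarrow> A.\<close>
definition CA_sub :: "'g::group_add set \<Rightarrow> 'g set \<Rightarrow> (('g \<Rightarrow> 'a) \<Rightarrow> 'a) \<Rightarrow> ('g \<Rightarrow> 'a) \<Rightarrow> ('g \<Rightarrow> 'a)" where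
  "CA_sub H S \<mu> x = (\<lambda>h. if h \<in> H then \<mu> (restrict (\<lambda>s. x (h + s)) S) else undefined)"

definition CA_full :: "'g::group_add set \<Rightarrow> (('g \<Rightarrow> 'a) \<Rightarrow> 'a) \<Rightarrow> ('g \<Rightarrow> 'a) \<Rightarrow> ('g \<Rightarrow> 'a)" where
  "CA_full S \<mu> x = (\<lambda>g. \<mu> (restrict (\<lambda>s. x (g + s)) S))"

end

theory Submission
  imports Defs
begin

text \<open>Sensitivity of \<open>\<Phi>\<^sub>G\<close> gives a radius \<open>N\<^sub>G\<close> that every configuration's orbit can be
  made to leave. Suppose \<open>\<Phi>\<^sub>H\<close> were not sensitive. Choose an \<open>E\<close>-radius \<open>N\<^sub>H\<close> covering the
  displacements \<open>-c\<^sub>g + g \<in> H\<close> of the elements \<open>g\<close> of the \<open>N\<^sub>G\<close>-ball from their coset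
  representatives \<open>c\<^sub>g\<close>, and a configuration \<open>x\<^sub>H\<close> on \<open>H\<close> whose orbit stays within radius \<open>N\<^sub>H\<close>
  of every orbit starting \<open>M\<close>-close to it. Copy \<open>x\<^sub>H\<close> onto every left coset \<open>c + H\<close>. Since
  \<open>S \<subseteq> H\<close>, \<open>\<Phi>\<^sub>G\<close> acts on each coset as \<open>\<Phi>\<^sub>H\<close>, so a configuration that agrees with the copy on
  the finitely many translates \<open>c\<^sub>g + (M-ball of H)\<close> has an orbit agreeing with the copy's on
  the \<open>N\<^sub>G\<close>-ball, contradicting sensitivity of \<open>\<Phi>\<^sub>G\<close>.\<close>

definition agree_on_ball :: "'g::group_add set \<Rightarrow> nat \<Rightarrow> ('g \<Rightarrow> 'a) \<Rightarrow> ('g \<Rightarrow> 'a) \<Rightarrow> bool" where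
  "agree_on_ball E n x y \<longleftrightarrow> (\<forall>h. word_len E h < n \<longrightarrow> x h = y h)"

lemma cantor_dist_le_iff: "cantor_dist E x y \<le> (1/2) ^ n \<longleftrightarrow> agree_on_ball E n x y"
proof (cases "x = y")
  case True
  then show ?thesis by (simp add: cantor_dist_def agree_on_ball_def)
next
  case False
  define k where "k = (LEAST k. \<exists>h. x h \<noteq> y h \<and> word_len E h = k)"
  have dist: "cantor_dist E x y = (1/2) ^ k"
    using False by (simp add: cantor_dist_def k_def)
  have "\<exists>k h. x h \<noteq> y h \<and> word_len E h = k"
    using False by (auto simp: fun_eq_iff)
  then have "\<exists>h. x h \<noteq> y h \<and> word_len E h = k"
    unfolding k_def by (rule LeastI_ex)
  then obtain h where h: "x h \<noteq> y h" "word_len E h = k" by blast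
  have k_least: "k \<le> word_len E h'" if "x h' \<noteq> y h'" for h'
    using that unfolding k_def by (auto intro: Least_le)
  have "n \<le> k \<longleftrightarrow> agree_on_ball E n x y"
    using h k_least unfolding agree_on_ball_def by (metis leD leI order.strict_trans2)
  then show ?thesis using dist by simp
qed

lemma sensitive_cantor_dist_iff:
  "sensitive (cantor_dist E) X \<Phi> \<longleftrightarrow>
     (\<exists>N. \<forall>x\<in>X. \<forall>M. \<exists>t. \<exists>y\<in>X.
        agree_on_ball E M x y \<and> \<not> agree_on_ball E N ((\<Phi> ^^ t) x) ((\<Phi> ^^ t) y))"
  (is "_ \<longleftrightarrow> (\<exists>N. ?sens N)")
proof
  assume "sensitive (cantor_dist E) X \<Phi>"
  then obtain \<epsilon> :: real where "\<epsilon> > 0" and sens: "\<forall>x\<in>X. \<forall>\<delta>>0. \<exists>t. \<exists>y\<in>X.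
      cantor_dist E x y \<le> \<delta> \<and> \<not> cantor_dist E ((\<Phi> ^^ t) x) ((\<Phi> ^^ t) y) \<le> \<epsilon>"
    unfolding sensitive_def by blast
  obtain N where N: "(1/2::real) ^ N < \<epsilon>"
    using real_arch_pow_inv[OF \<open>\<epsilon> > 0\<close>, of "1/2"] by auto
  have "?sens N"
  proof (intro ballI allI)
    fix x M assume "x \<in> X"
    then obtain t y where "y \<in> X" "cantor_dist E x y \<le> (1/2) ^ M"
        "\<not> cantor_dist E ((\<Phi> ^^ t) x) ((\<Phi> ^^ t) y) \<le> \<epsilon>"
      using sens by (meson zero_less_divide_1_iff zero_less_numeral zero_less_power)
    moreover from this(3) have "\<not> cantor_dist E ((\<Phi> ^^ t) x) ((\<Phi> ^^ t) y) \<le> (1/2) ^ N"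
      using N by linarith
    ultimately show "\<exists>t. \<exists>y\<in>X. agree_on_ball E M x y \<and> \<not> agree_on_ball E N ((\<Phi> ^^ t) x) ((\<Phi> ^^ t) y)"
      by (auto simp: cantor_dist_le_iff[symmetric])
  qed
  then show "\<exists>N. ?sens N" ..
next
  assume "\<exists>N. ?sens N"
  then obtain N where sens: "?sens N" ..
  show "sensitive (cantor_dist E) X \<Phi>"
    unfolding sensitive_def
  proof (intro exI[of _ "(1/2::real) ^ N"] conjI ballI allI impI)
    fix x and \<delta> :: real assume "x \<in> X" "\<delta> > 0"
    obtain M where M: "(1/2::real) ^ M < \<delta>"
      using real_arch_pow_inv[OF \<open>\<delta> > 0\<close>, of "1/2"] by auto
    obtain t y where "y \<in> X" "agree_on_ball E M x y" "\<not> agree_on_ball E N ((\<Phi> ^^ t) x) ((\<Phi> ^^ t) y)"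
      using sens \<open>x \<in> X\<close> by blast
    moreover from this(2) have "cantor_dist E x y \<le> \<delta>"
      using M cantor_dist_le_iff[of E x y M] by linarith
    ultimately show "\<exists>t. \<exists>y\<in>X. cantor_dist E x y \<le> \<delta> \<and>
        \<not> cantor_dist E ((\<Phi> ^^ t) x) ((\<Phi> ^^ t) y) \<le> (1/2) ^ N"
      by (auto simp: cantor_dist_le_iff)
  qed simp
qed

lemma finite_word_ball:
  assumes "finite E"
  shows "finite {h \<in> generated_by E. word_len E h < n}"
proof (rule finite_subset)
  show "finite (sum_list ` {xs. set xs \<subseteq> E \<and> length xs \<le> n})"
    using finite_lists_length_le[OF assms] by blast
  show "{h \<in> generated_by E. word_len E h < n} \<subseteq> sum_list ` {xs. set xs \<subseteq> E \<and> length xs \<le> n}"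
  proof
    fix h assume h: "h \<in> {h \<in> generated_by E. word_len E h < n}"
    then have "\<exists>m xs. length xs = m \<and> set xs \<subseteq> E \<and> sum_list xs = h"
      unfolding generated_by_def by auto
    then have "\<exists>xs. length xs = word_len E h \<and> set xs \<subseteq> E \<and> sum_list xs = h"
      unfolding word_len_def by (rule LeastI_ex)
    then obtain xs where "length xs = word_len E h" "set xs \<subseteq> E" "sum_list xs = h"
      by blast
    then show "h \<in> sum_list ` {xs. set xs \<subseteq> E \<and> length xs \<le> n}"
      using h by force
  qed
qed

lemma finite_word_len_bounded: "finite F \<Longrightarrow> \<exists>n. \<forall>h\<in>F. word_len E h < n"
  using finite_nat_set_iff_bounded[of "word_len E ` F"] by simp

definition coset_rep :: "'g::group_add set \<Rightarrow> 'g \<Rightarrow> 'g" where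
  "coset_rep H g = (SOME c. - c + g \<in> H)"

definition translate_restrict :: "'g::group_add set \<Rightarrow> 'g \<Rightarrow> ('g \<Rightarrow> 'a) \<Rightarrow> ('g \<Rightarrow> 'a)" where
  "translate_restrict H c y = restrict (\<lambda>h. y (c + h)) H"

definition coset_copies :: "'g::group_add set \<Rightarrow> ('g \<Rightarrow> 'a) \<Rightarrow> ('g \<Rightarrow> 'a)" where
  "coset_copies H x = (\<lambda>g. x (- coset_rep H g + g))"

locale add_subgroup =
  fixes H :: "'g::group_add set"
  assumes zero_mem: "0 \<in> H"
    and add_mem: "\<And>a b. a \<in> H \<Longrightarrow> b \<in> H \<Longrightarrow> a + b \<in> H"
    and minus_mem: "\<And>a. a \<in> H \<Longrightarrow> - a \<in> H"
begin

lemma same_coset_iff: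
  assumes "- a + b \<in> H"
  shows "- z + a \<in> H \<longleftrightarrow> - z + b \<in> H"
proof
  assume "- z + a \<in> H"
  then have "(- z + a) + (- a + b) \<in> H" using add_mem assms by blast
  then show "- z + b \<in> H" by (simp add: add.assoc[symmetric])
next
  assume "- z + b \<in> H"
  then have "(- z + b) + - (- a + b) \<in> H" using add_mem minus_mem assms by blast
  then show "- z + a \<in> H" by (simp add: minus_add add.assoc[symmetric])
qed

lemma coset_rep_mem: "- coset_rep H g + g \<in> H"
  unfolding coset_rep_def by (rule someI[of _ g]) (simp add: zero_mem)

lemma coset_rep_add:
  assumes "h \<in> H"
  shows "coset_rep H (coset_rep H g + h) = coset_rep H g"
proof -
  have "- coset_rep H g + (coset_rep H g + h) \<in> H"
    using assms by (simp add: add.assoc[symmetric])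
  then have "(\<lambda>z. - z + (coset_rep H g + h) \<in> H) = (\<lambda>z. - z + g \<in> H)"
    using same_coset_iff coset_rep_mem by blast
  then show ?thesis
    by (simp add: coset_rep_def[of H "coset_rep H g + h"] coset_rep_def[of H g, symmetric])
qed

lemma translate_restrict_coset_copies:
  assumes "x \<in> extensional H"
  shows "translate_restrict H (coset_rep H g) (coset_copies H x) = x"
proof
  fix h
  show "translate_restrict H (coset_rep H g) (coset_copies H x) h = x h"
  proof (cases "h \<in> H")
    case True
    then show ?thesis by (simp add: translate_restrict_def coset_copies_def coset_rep_add)
  next
    case False
    then show ?thesis using extensional_arb[OF assms] by (simp add: translate_restrict_def)
  qed
qed

lemma CA_sub_translate_restrict:
  assumes "S \<subseteq> H"
  shows "CA_sub H S \<mu> (translate_restrict H c y) = translate_restrict H c (CA_full S \<mu> y)"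
proof
  fix h
  show "CA_sub H S \<mu> (translate_restrict H c y) h = translate_restrict H c (CA_full S \<mu> y) h"
  proof (cases "h \<in> H")
    case True
    then have "restrict (\<lambda>s. translate_restrict H c y (h + s)) S = restrict (\<lambda>s. y (c + h + s)) S"
      using assms add_mem by (intro restrict_ext) (auto simp: translate_restrict_def add.assoc)
    then show ?thesis using True by (simp add: CA_sub_def CA_full_def translate_restrict_def)
  qed (simp add: CA_sub_def translate_restrict_def)
qed

lemma CA_sub_iter_translate_restrict:
  assumes "S \<subseteq> H"
  shows "(CA_sub H S \<mu> ^^ t) (translate_restrict H c y) = translate_restrict H c ((CA_full S \<mu> ^^ t) y)"
  by (induction t) (simp_all add: CA_sub_translate_restrict[OF assms])

lemma CA_full_iter_agree_at:
  assumes "S \<subseteq> H" and "x \<in> extensional H"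
    and stable: "\<And>t y. y \<in> extensional H \<Longrightarrow> agree_on_ball E M x y \<Longrightarrow>
        agree_on_ball E N ((CA_sub H S \<mu> ^^ t) x) ((CA_sub H S \<mu> ^^ t) y)"
    and close: "\<And>h. h \<in> H \<Longrightarrow> word_len E h < M \<Longrightarrow>
        y (coset_rep H g + h) = coset_copies H x (coset_rep H g + h)"
    and g_near: "word_len E (- coset_rep H g + g) < N"
  shows "(CA_full S \<mu> ^^ t) y g = (CA_full S \<mu> ^^ t) (coset_copies H x) g"
proof -
  let ?c = "coset_rep H g" and ?\<Phi>t = "CA_full S \<mu> ^^ t"
  have "x h = translate_restrict H ?c y h" if "word_len E h < M" for h
  proof (cases "h \<in> H")
    case True
    then have "translate_restrict H ?c y h = translate_restrict H ?c (coset_copies H x) h"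
      using close that by (simp add: translate_restrict_def)
    then show ?thesis by (simp add: translate_restrict_coset_copies[OF \<open>x \<in> extensional H\<close>])
  next
    case False
    then show ?thesis
      using extensional_arb[OF \<open>x \<in> extensional H\<close>] by (simp add: translate_restrict_def)
  qed
  then have "agree_on_ball E M x (translate_restrict H ?c y)"
    unfolding agree_on_ball_def by blast
  moreover have "translate_restrict H ?c y \<in> extensional H"
    by (simp add: translate_restrict_def)
  ultimately have "agree_on_ball E N ((CA_sub H S \<mu> ^^ t) x) ((CA_sub H S \<mu> ^^ t) (translate_restrict H ?c y))"
    using stable by blast
  then have "agree_on_ball E N (translate_restrict H ?c (?\<Phi>t (coset_copies H x)))
      (translate_restrict H ?c (?\<Phi>t y))"
    by (simp only: CA_sub_iter_translate_restrict[OF \<open>S \<subseteq> H\<close>, symmetric]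
        translate_restrict_coset_copies[OF \<open>x \<in> extensional H\<close>])
  then have "?\<Phi>t (coset_copies H x) (?c + (- ?c + g)) = ?\<Phi>t y (?c + (- ?c + g))"
    using g_near coset_rep_mem by (auto simp: agree_on_ball_def translate_restrict_def)
  then show ?thesis by (simp add: add.assoc[symmetric])
qed

lemma CA_full_iter_agree_on_finite:
  assumes "S \<subseteq> H" and "x \<in> extensional H"
    and "finite E" and "generated_by E = H" and "finite B"
    and stable: "\<And>t y. y \<in> extensional H \<Longrightarrow> agree_on_ball E M x y \<Longrightarrow>
        agree_on_ball E N ((CA_sub H S \<mu> ^^ t) x) ((CA_sub H S \<mu> ^^ t) y)"
    and near: "\<forall>g\<in>B. word_len E (- coset_rep H g + g) < N"
  obtains K where "\<And>t y g. agree_on_ball D K (coset_copies H x) y \<Longrightarrow> g \<in> B \<Longrightarrow>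
      (CA_full S \<mu> ^^ t) y g = (CA_full S \<mu> ^^ t) (coset_copies H x) g"
proof -
  define BH where "BH = {h \<in> generated_by E. word_len E h < M}"
  have "finite ((\<lambda>(c, h). c + h) ` (coset_rep H ` B \<times> BH))"
    unfolding BH_def using \<open>finite B\<close> finite_word_ball[OF \<open>finite E\<close>] by simp
  then obtain K where "\<forall>z \<in> (\<lambda>(c, h). c + h) ` (coset_rep H ` B \<times> BH). word_len D z < K"
    using finite_word_len_bounded by blast
  then have K: "\<forall>g\<in>B. \<forall>h\<in>BH. word_len D (coset_rep H g + h) < K" by blast
  have "(CA_full S \<mu> ^^ t) y g = (CA_full S \<mu> ^^ t) (coset_copies H x) g"
    if close: "agree_on_ball D K (coset_copies H x) y" and "g \<in> B" for t y g
  proof (rule CA_full_iter_agree_at[OF \<open>S \<subseteq> H\<close> \<open>x \<in> extensional H\<close> stable])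
    fix h assume "h \<in> H" "word_len E h < M"
    then have "word_len D (coset_rep H g + h) < K"
      using K \<open>g \<in> B\<close> \<open>generated_by E = H\<close> unfolding BH_def by blast
    then show "y (coset_rep H g + h) = coset_copies H x (coset_rep H g + h)"
      using close unfolding agree_on_ball_def by simp
  next
    show "word_len E (- coset_rep H g + g) < N" using near \<open>g \<in> B\<close> by blast
  qed
  then show ?thesis using that by blast
qed

end

theorem proposition6:
  fixes H E D S :: "'g::group_add set"
    and \<mu> :: "('g \<Rightarrow> 'a::finite) \<Rightarrow> 'a"
  assumes H_subgroup: "0 \<in> H" "\<And>a b. a \<in> H \<Longrightarrow> b \<in> H \<Longrightarrow> a + b \<in> H"
      "\<And>a. a \<in> H \<Longrightarrow> - a \<in> H"
    and E_fin: "finite E" and E_sub: "E \<subseteq> H" and E_inv: "\<And>e. e \<in> E \<Longrightarrow> - e \<in> E"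
    and E_gen: "generated_by E = H"
    and D_fin: "finite D" and D_sup: "E \<subseteq> D" and D_inv: "\<And>e. e \<in> D \<Longrightarrow> - e \<in> D"
    and D_gen: "generated_by D = UNIV"
    and S_fin: "finite S" and S_sub: "S \<subseteq> H"
    and sensG: "sensitive (cantor_dist D) UNIV (CA_full S \<mu>)"
  shows "sensitive (cantor_dist E) (extensional H) (CA_sub H S \<mu>)"
proof (rule ccontr)
  interpret add_subgroup H using H_subgroup by unfold_locales auto
  let ?\<Phi> = "CA_full S \<mu>" and ?\<Psi> = "CA_sub H S \<mu>"
  assume "\<not> ?thesis"
  then have not_sensH: "\<forall>N. \<exists>x\<in>extensional H. \<exists>M. \<forall>t. \<forall>y\<in>extensional H.
      agree_on_ball E M x y \<longrightarrow> agree_on_ball E N ((?\<Psi> ^^ t) x) ((?\<Psi> ^^ t) y)"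
    unfolding sensitive_cantor_dist_iff by blast
  obtain NG where sensG': "\<forall>x. \<forall>M. \<exists>t y. agree_on_ball D M x y \<and>
      \<not> agree_on_ball D NG ((?\<Phi> ^^ t) x) ((?\<Phi> ^^ t) y)"
    using sensG unfolding sensitive_cantor_dist_iff by blast
  define BG where "BG = {g \<in> generated_by D. word_len D g < NG}"
  have "finite BG" unfolding BG_def using finite_word_ball[OF D_fin] .
  then have "finite ((\<lambda>g. - coset_rep H g + g) ` BG)" by simp
  then obtain NH where "\<forall>h \<in> (\<lambda>g. - coset_rep H g + g) ` BG. word_len E h < NH"
    using finite_word_len_bounded by blast
  then have NH: "\<forall>g\<in>BG. word_len E (- coset_rep H g + g) < NH" by blast
  obtain x M where "x \<in> extensional H" and stable: "\<And>t y. y \<in> extensional H \<Longrightarrow>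
      agree_on_ball E M x y \<Longrightarrow> agree_on_ball E NH ((?\<Psi> ^^ t) x) ((?\<Psi> ^^ t) y)"
    using not_sensH[THEN spec[of _ NH]] by blast
  obtain K where orbits_agree: "\<And>t y g. agree_on_ball D K (coset_copies H x) y \<Longrightarrow> g \<in> BG \<Longrightarrow>
      (?\<Phi> ^^ t) y g = (?\<Phi> ^^ t) (coset_copies H x) g"
    using CA_full_iter_agree_on_finite[OF S_sub \<open>x \<in> extensional H\<close> E_fin E_gen \<open>finite BG\<close> stable NH]
    by blast
  obtain t y where close: "agree_on_ball D K (coset_copies H x) y"
      and leaves: "\<not> agree_on_ball D NG ((?\<Phi> ^^ t) (coset_copies H x)) ((?\<Phi> ^^ t) y)"
    using sensG' by blast
  from leaves obtain g where "word_len D g < NG" "(?\<Phi> ^^ t) (coset_copies H x) g \<noteq> (?\<Phi> ^^ t) y g"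
    unfolding agree_on_ball_def by blast
  then show False using orbits_agree[OF close, of g t] unfolding BG_def D_gen by simp
qed

end
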